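(* Let $n\ge2$. The Lie algebra $(\mathfrak{sl}_{n+1}(\mathbb C),\mu_\infty)$, where \[\mu_\infty:=[\cdot,\cdot]\big|_{\mathfrak{sl}_n(\mathbb C)\wedge\mathfrak{sl}_n(\mathbb C)}+[\cdot,\cdot]\big|_{\mathfrak{sl}_n(\mathbb C)\wedge\mathfrak s}+\sqrt{\frac{n^2-2}{n(n+1)}}\,\mathrm{Pr}_{\mathbb CI}\circ[\cdot,\cdot]\big|_{\mathfrak s\wedge\mathfrak s},\] is a semi-direct product $\mathfrak{sl}_n(\mathbb C)\ltimes\mathfrak h_{2n+1}$, where $\mathfrak h_{2n+1}$ is the complex Heisenberg Lie algebra (realized as $(\mathbb CI\oplus\mathfrak s,\mu_\infty)$).
   Context: $[\cdot,\cdot]$ is the commutator on $\mathfrak{sl}_{n+1}(\mathbb C)=\mathfrak{sl}_n(\mathbb C)\oplus\mathbb CI\oplus\mathfrak s$, with $\mathfrak{sl}_n(\mathbb C)$ the upper-left $n\times n$ block, $I=\sqrt{\tfrac1{n(n+1)}}\operatorname{diag}(1,\dots,1,-n)$, $\mathfrak s=\operatorname{span}_{\mathbb C}\{e_{i(n+1)},e_{(n+1)i}\}_{i=1}^n$, and $\mathrm{Pr}_{\mathbb CI}$ the orthogonal projection onto $\mathbb CI$ with respect to $\langle X,Y\rangle=\operatorname{tr}(XY^* )$. The complex Heisenberg Lie algebra $\mathfrak h_{2n+1}$ has a basis $X_1,\dots,X_n,Y_1,\dots,Y_n,Z$ whose only nonzero brackets are $[X_i,Y_j]=\delta_{ij}Z$.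 *)

theory Defs
  imports Complex_Main "HOL-Library.Function_Algebras"
begin

text \<open>Square matrices of size N are represented as functions nat => nat => complex
  vanishing outside the index block {0..<N} x {0..<N} (0-based indices; the
  (n+1)-st row/column of the paper is index n).\<close>

type_synonym cmat = "nat \<Rightarrow> nat \<Rightarrow> complex"

definition msupp :: "nat \<Rightarrow> cmat \<Rightarrow> bool" where
  "msupp N A \<longleftrightarrow> (\<forall>i j. (N \<le> i \<or> N \<le> j) \<longrightarrow> A i j = 0)"

definition mtrace :: "nat \<Rightarrow> cmat \<Rightarrow> complex" where
  "mtrace N A = (\<Sum>i<N. A i i)"

definition msc :: "complex \<Rightarrow> cmat \<Rightarrow> cmat" where
  "msc c A = (\<lambda>i j. c * A i j)"

definition mmul :: "nat \<Rightarrow> cmat \<Rightarrow> cmat \<Rightarrow> cmat" where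
  "mmul N A B = (\<lambda>i j. if i < N \<and> j < N then (\<Sum>k<N. A i k * B k j) else 0)"

definition comm :: "nat \<Rightarrow> cmat \<Rightarrow> cmat \<Rightarrow> cmat" where
  "comm N A B = (\<lambda>i j. mmul N A B i j - mmul N B A i j)"

definition sl :: "nat \<Rightarrow> cmat set" where
  "sl N = {A. msupp N A \<and> mtrace N A = 0}"

definition hs :: "nat \<Rightarrow> cmat \<Rightarrow> cmat \<Rightarrow> complex" where
  "hs N A B = (\<Sum>i<N. \<Sum>j<N. A i j * cnj (B i j))"

definition Imat :: "nat \<Rightarrow> cmat" where
  "Imat n = (\<lambda>i j. if i = j \<and> i < n then complex_of_real (sqrt (1 / (real n * (real n + 1))))
                   else if i = j \<and> i = n then - of_nat n * complex_of_real (sqrt (1 / (real n * (real n + 1))))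
                   else 0)"

definition s_space :: "nat \<Rightarrow> cmat set" where
  "s_space n = {A. \<forall>i j. A i j \<noteq> 0 \<longrightarrow> ((i < n \<and> j = n) \<or> (i = n \<and> j < n))}"

definition PrCI :: "nat \<Rightarrow> cmat \<Rightarrow> cmat" where
  "PrCI n X = msc (hs (Suc n) X (Imat n) / hs (Suc n) (Imat n) (Imat n)) (Imat n)"

text \<open>Components of X in sl_{n+1} = sl_n + CI + s (the decomposition is orthogonal,
  so the CI-component is PrCI X; the s-component is the last row/column off the
  diagonal; the sl_n-component is the rest).\<close>
definition compS :: "nat \<Rightarrow> cmat \<Rightarrow> cmat" where
  "compS n X = (\<lambda>i j. if (i < n \<and> j = n) \<or> (i = n \<and> j < n) then X i j else 0)"

definition compSl :: "nat \<Rightarrow> cmat \<Rightarrow> cmat" where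
  "compSl n X = (\<lambda>i j. X i j - PrCI n X i j - compS n X i j)"

definition mu_inf :: "nat \<Rightarrow> cmat \<Rightarrow> cmat \<Rightarrow> cmat" where
  "mu_inf n X Y =
     comm (Suc n) (compSl n X) (compSl n Y)
     + comm (Suc n) (compSl n X) (compS n Y)
     + comm (Suc n) (compS n X) (compSl n Y)
     + msc (complex_of_real (sqrt ((real n ^ 2 - 2) / (real n * (real n + 1)))))
           (PrCI n (comm (Suc n) (compS n X) (compS n Y)))"

definition heis_part :: "nat \<Rightarrow> cmat set" where
  "heis_part n = {X. \<exists>c S. S \<in> s_space n \<and> X = msc c (Imat n) + S}"

definition subspace_c :: "cmat set \<Rightarrow> bool" where
  "subspace_c V \<longleftrightarrow> 0 \<in> V \<and> (\<forall>x\<in>V. \<forall>y\<in>V. x + y \<in> V) \<and> (\<forall>c. \<forall>x\<in>V. msc c x \<in> V)"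

definition lie_algebra :: "cmat set \<Rightarrow> (cmat \<Rightarrow> cmat \<Rightarrow> cmat) \<Rightarrow> bool" where
  "lie_algebra V b \<longleftrightarrow> subspace_c V
    \<and> (\<forall>x\<in>V. \<forall>y\<in>V. b x y \<in> V)
    \<and> (\<forall>x\<in>V. \<forall>y\<in>V. \<forall>z\<in>V. \<forall>c. b (x + msc c y) z = b x z + msc c (b y z))
    \<and> (\<forall>x\<in>V. \<forall>y\<in>V. \<forall>z\<in>V. \<forall>c. b z (x + msc c y) = b z x + msc c (b z y))
    \<and> (\<forall>x\<in>V. b x x = 0)
    \<and> (\<forall>x\<in>V. \<forall>y\<in>V. \<forall>z\<in>V. b x (b y z) + b y (b z x) + b z (b x y) = 0)"

definition subalgebra :: "cmat set \<Rightarrow> (cmat \<Rightarrow> cmat \<Rightarrow> cmat) \<Rightarrow> cmat set \<Rightarrow> bool" where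
  "subalgebra V b S \<longleftrightarrow> S \<subseteq> V \<and> subspace_c S \<and> (\<forall>x\<in>S. \<forall>y\<in>S. b x y \<in> S)"

definition lie_ideal :: "cmat set \<Rightarrow> (cmat \<Rightarrow> cmat \<Rightarrow> cmat) \<Rightarrow> cmat set \<Rightarrow> bool" where
  "lie_ideal V b H \<longleftrightarrow> H \<subseteq> V \<and> subspace_c H \<and> (\<forall>x\<in>V. \<forall>y\<in>H. b x y \<in> H)"

definition semidirect :: "cmat set \<Rightarrow> (cmat \<Rightarrow> cmat \<Rightarrow> cmat) \<Rightarrow> cmat set \<Rightarrow> cmat set \<Rightarrow> bool" where
  "semidirect V b S H \<longleftrightarrow> subalgebra V b S \<and> lie_ideal V b H \<and> S \<inter> H = {0}
     \<and> (\<forall>x\<in>V. \<exists>s\<in>S. \<exists>h\<in>H. x = s + h)"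

text \<open>(H, b) is isomorphic to the complex Heisenberg algebra h_{2m+1}: H has a basis
  X_1..X_m, Y_1..Y_m, Z whose only nonzero brackets are [X_i,Y_j] = delta_ij Z
  (brackets of basis vectors are determined up to antisymmetry).\<close>
definition heisenberg :: "nat \<Rightarrow> cmat set \<Rightarrow> (cmat \<Rightarrow> cmat \<Rightarrow> cmat) \<Rightarrow> bool" where
  "heisenberg m H b \<longleftrightarrow> (\<exists>X Y Z.
      (\<forall>i<m. X i \<in> H \<and> Y i \<in> H) \<and> Z \<in> H
    \<and> (\<forall>a a' c. (\<Sum>i<m. msc (a i) (X i)) + (\<Sum>i<m. msc (a' i) (Y i)) + msc c Z = 0
          \<longrightarrow> (\<forall>i<m. a i = 0 \<and> a' i = 0) \<and> c = 0)
    \<and> (\<forall>h\<in>H. \<exists>a a' c. h = (\<Sum>i<m. msc (a i) (X i)) + (\<Sum>i<m. msc (a' i) (Y i)) + msc c Z)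
    \<and> (\<forall>i<m. \<forall>j<m. b (X i) (Y j) = (if i = j then Z else 0)
                  \<and> b (X i) (X j) = 0 \<and> b (Y i) (Y j) = 0)
    \<and> (\<forall>i<m. b (X i) Z = 0 \<and> b (Y i) Z = 0))"

end

theory Submission
  imports Defs
begin

text \<open>
  Write X in sl(n+1) as A + c I + S with A in sl(n) and S in s. The bracket mu_inf does not see c,
  so CI is central. Pr_CI annihilates every commutator [A, M] with A in sl(n): such a commutator
  has trace zero and vanishing (n+1, n+1) entry, hence is orthogonal to I. Therefore the Jacobi
  identity for mu_inf reduces to that of the commutator. Since [sl(n), s] lies in s, the space
  CI + s is an ideal complementary to the subalgebra sl(n). Finally, for X_i = e_(i,n+1) and
  Y_i = e_(n+1,i) one has [X_i, Y_j] = e_ij - delta_ij e_(n+1,n+1), whose projection onto CI is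
  delta_ij (n+1)/sqrt(n(n+1)) I; the factor sqrt((n^2-2)/(n(n+1))) in front of Pr_CI is nonzero
  for n >= 2, so CI + s is a Heisenberg algebra with centre CI.
\<close>

section \<open>Matrix algebra\<close>

lemma msc_apply [simp]: "msc c A i j = c * A i j"
  by (simp add: msc_def)

lemma msc_add: "msc c (A + B) = msc c A + msc c B"
  by (simp add: fun_eq_iff algebra_simps)

lemma msc_msc: "msc a (msc b A) = msc (a * b) A"
  by (simp add: fun_eq_iff)

lemma msc_zero [simp]: "msc c 0 = 0"
  by (simp add: fun_eq_iff)

lemma msc_0 [simp]: "msc 0 A = 0"
  by (simp add: fun_eq_iff)

lemma sum_cmat_apply: "(\<Sum>k\<in>K. f k :: cmat) i j = (\<Sum>k\<in>K. f k i j)"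
  by (induct K rule: infinite_finite_induct) auto

lemma mmul_add_left: "mmul N (A + B) C = mmul N A C + mmul N B C"
  by (simp add: mmul_def fun_eq_iff sum.distrib algebra_simps)

lemma mmul_add_right: "mmul N C (A + B) = mmul N C A + mmul N C B"
  by (simp add: mmul_def fun_eq_iff sum.distrib algebra_simps)

lemma mmul_diff_left: "mmul N (A - B) C = mmul N A C - mmul N B C"
  by (simp add: mmul_def fun_eq_iff sum_subtractf algebra_simps)

lemma mmul_diff_right: "mmul N C (A - B) = mmul N C A - mmul N C B"
  by (simp add: mmul_def fun_eq_iff sum_subtractf algebra_simps)

lemma mmul_msc_left: "mmul N (msc c A) C = msc c (mmul N A C)"
  by (simp add: mmul_def fun_eq_iff sum_distrib_left algebra_simps)

lemma mmul_msc_right: "mmul N C (msc c A) = msc c (mmul N C A)"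
  by (simp add: mmul_def fun_eq_iff sum_distrib_left algebra_simps)

lemma mmul_assoc: "mmul N A (mmul N B C) = mmul N (mmul N A B) C"
proof (intro ext)
  fix i j
  have "(\<Sum>k<N. A i k * (\<Sum>l<N. B k l * C l j)) = (\<Sum>k<N. \<Sum>l<N. A i k * B k l * C l j)"
    by (simp add: sum_distrib_left mult.assoc)
  also have "\<dots> = (\<Sum>l<N. \<Sum>k<N. A i k * B k l * C l j)"
    by (rule sum.swap)
  also have "\<dots> = (\<Sum>l<N. (\<Sum>k<N. A i k * B k l) * C l j)"
    by (simp add: sum_distrib_right)
  finally show "mmul N A (mmul N B C) i j = mmul N (mmul N A B) C i j"
    by (simp add: mmul_def)
qed

lemma comm_eq: "comm N A B = mmul N A B - mmul N B A"
  by (simp add: comm_def fun_eq_iff)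

lemma comm_add_left: "comm N (A + B) C = comm N A C + comm N B C"
  by (simp add: comm_eq mmul_add_left mmul_add_right)

lemma comm_add_right: "comm N C (A + B) = comm N C A + comm N C B"
  by (simp add: comm_eq mmul_add_left mmul_add_right)

lemma comm_msc_left: "comm N (msc c A) C = msc c (comm N A C)"
  by (simp add: comm_eq mmul_msc_left mmul_msc_right fun_eq_iff algebra_simps)

lemma comm_msc_right: "comm N C (msc c A) = msc c (comm N C A)"
  by (simp add: comm_eq mmul_msc_left mmul_msc_right fun_eq_iff algebra_simps)

lemma comm_swap: "comm N A B = - comm N B A"
  by (simp add: comm_eq)

lemma comm_self [simp]: "comm N A A = 0"
  by (simp add: comm_eq)

lemma comm_zero_left [simp]: "comm N 0 A = 0"
  by (simp add: comm_def mmul_def fun_eq_iff)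

lemma comm_zero_right [simp]: "comm N A 0 = 0"
  by (simp add: comm_def mmul_def fun_eq_iff)

lemma comm_jacobi: "comm N A (comm N B C) + comm N B (comm N C A) + comm N C (comm N A B) = 0"
  by (simp add: comm_eq mmul_diff_left mmul_diff_right mmul_assoc)

lemma mtrace_comm: "mtrace N (comm N A B) = 0"
proof -
  have "mtrace N (comm N A B) = (\<Sum>i<N. \<Sum>k<N. A i k * B k i) - (\<Sum>i<N. \<Sum>k<N. B i k * A k i)"
    by (simp add: mtrace_def comm_def mmul_def sum_subtractf)
  also have "(\<Sum>i<N. \<Sum>k<N. B i k * A k i) = (\<Sum>k<N. \<Sum>i<N. B i k * A k i)"
    by (rule sum.swap)
  finally show ?thesis
    by (simp add: mult.commute)
qed

definition emat :: "nat \<Rightarrow> nat \<Rightarrow> cmat" where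
  "emat i j = (\<lambda>p q. if p = i \<and> q = j then 1 else 0)"

lemma mmul_emat:
  assumes "i < N" "l < N"
  shows "mmul N (emat i j) (emat k l) = (if j = k \<and> j < N then emat i l else 0)"
proof (intro ext)
  fix p q
  have "(\<Sum>m<N. emat i j p m * emat k l m q)
      = (\<Sum>m<N. if m = j then (if p = i \<and> j = k \<and> q = l then 1 else 0) else 0)"
    by (rule sum.cong) (auto simp: emat_def)
  then show "mmul N (emat i j) (emat k l) p q = (if j = k \<and> j < N then emat i l else 0) p q"
    using assms by (auto simp: mmul_def emat_def)
qed

lemma sum_msc_emat_col: "(\<Sum>k<m. msc (a k) (emat k j)) p q = (if p < m \<and> q = j then a p else 0)"
proof -
  have "(\<Sum>k<m. msc (a k) (emat k j)) p q = (\<Sum>k<m. if k = p then (if q = j then a k else 0) else 0)"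
    unfolding sum_cmat_apply by (rule sum.cong) (auto simp: emat_def)
  then show ?thesis
    by simp
qed

lemma sum_msc_emat_row: "(\<Sum>k<m. msc (a k) (emat j k)) p q = (if p = j \<and> q < m then a q else 0)"
proof -
  have "(\<Sum>k<m. msc (a k) (emat j k)) p q = (\<Sum>k<m. if k = q then (if p = j then a k else 0) else 0)"
    unfolding sum_cmat_apply by (rule sum.cong) (auto simp: emat_def)
  then show ?thesis
    by simp
qed

lemma sl_iff: "A \<in> sl N \<longleftrightarrow> (\<forall>i j. (N \<le> i \<or> N \<le> j) \<longrightarrow> A i j = 0) \<and> mtrace N A = 0"
  by (simp add: sl_def msupp_def)

lemma slD: "A \<in> sl N \<Longrightarrow> N \<le> i \<or> N \<le> j \<Longrightarrow> A i j = 0"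
  by (auto simp: sl_iff)

lemma sl_add: "A \<in> sl N \<Longrightarrow> B \<in> sl N \<Longrightarrow> A + B \<in> sl N"
  by (simp add: sl_iff mtrace_def sum.distrib)

lemma sl_diff: "A \<in> sl N \<Longrightarrow> B \<in> sl N \<Longrightarrow> A - B \<in> sl N"
  by (simp add: sl_iff mtrace_def sum_subtractf)

lemma sl_msc: "A \<in> sl N \<Longrightarrow> msc c A \<in> sl N"
  by (simp add: sl_iff mtrace_def flip: sum_distrib_left)

lemma sl_zero: "0 \<in> sl N"
  by (simp add: sl_iff mtrace_def)

lemma subspace_c_sl: "subspace_c (sl N)"
  by (simp add: subspace_c_def sl_add sl_msc sl_zero)

lemma comm_in_sl: "comm N A B \<in> sl N"
  using mtrace_comm[of N A B] by (simp add: sl_iff comm_def mmul_def)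

lemma sl_iff_sl_Suc: "A \<in> sl n \<longleftrightarrow> A \<in> sl (Suc n) \<and> (\<forall>i. A i n = 0 \<and> A n i = 0)"
proof
  assume A: "A \<in> sl n"
  then have "A i j = 0" if "Suc n \<le> i \<or> Suc n \<le> j" for i j
    using that by (intro slD[OF A]) auto
  moreover have "mtrace (Suc n) A = mtrace n A"
    using slD[OF A, of n n] by (simp add: mtrace_def)
  ultimately show "A \<in> sl (Suc n) \<and> (\<forall>i. A i n = 0 \<and> A n i = 0)"
    using A slD[OF A] by (simp add: sl_iff)
next
  assume A: "A \<in> sl (Suc n) \<and> (\<forall>i. A i n = 0 \<and> A n i = 0)"
  then have "A i j = 0" if "n \<le> i \<or> n \<le> j" for i j
    using that slD[of A "Suc n" i j] by (cases "i = n \<or> j = n") auto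
  moreover have "mtrace n A = mtrace (Suc n) A"
    using A by (simp add: mtrace_def)
  ultimately show "A \<in> sl n"
    using A by (simp add: sl_iff)
qed

lemma sl_subset_sl_Suc: "sl n \<subseteq> sl (Suc n)"
  using sl_iff_sl_Suc[of _ n] by blast

lemma comm_sl_sl:
  assumes "A \<in> sl n" "B \<in> sl n"
  shows "comm (Suc n) A B \<in> sl n"
  using assms comm_in_sl unfolding sl_iff_sl_Suc[of _ n] by (simp add: comm_def mmul_def)

section \<open>The decomposition sl(n+1) = sl(n) + CI + s\<close>

definition Imat_coeff :: "nat \<Rightarrow> complex" where
  "Imat_coeff n = complex_of_real (sqrt (1 / (real n * (real n + 1))))"

lemma Imat_eq: "Imat n = (\<lambda>i j. if i = j \<and> i < n then Imat_coeff n
    else if i = j \<and> i = n then - of_nat n * Imat_coeff n else 0)"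
  unfolding Imat_def Imat_coeff_def by simp

lemma cnj_Imat_coeff [simp]: "cnj (Imat_coeff n) = Imat_coeff n"
  by (simp add: Imat_coeff_def)

lemma Imat_coeff_sq: "0 < n \<Longrightarrow> Imat_coeff n ^ 2 * (of_nat n * (of_nat n + 1)) = 1"
proof -
  assume "0 < n"
  then have "Imat_coeff n ^ 2 = complex_of_real (1 / (real n * (real n + 1)))"
    unfolding Imat_coeff_def by (simp flip: of_real_power)
  moreover have "(of_nat n * (of_nat n + 1) :: complex) = complex_of_real (real n * (real n + 1))"
    by simp
  ultimately show ?thesis
    using \<open>0 < n\<close> by (simp flip: of_real_mult)
qed

lemma Imat_coeff_nonzero: "0 < n \<Longrightarrow> Imat_coeff n \<noteq> 0"
  using Imat_coeff_sq[of n] by (auto simp: power2_eq_square)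

lemma Imat_in_sl: "Imat n \<in> sl (Suc n)"
  by (simp add: sl_iff mtrace_def Imat_eq)

lemma hs_Imat: "hs (Suc n) M (Imat n) = Imat_coeff n * (\<Sum>i<n. M i i) - of_nat n * Imat_coeff n * M n n"
proof -
  have row: "(\<Sum>j<Suc n. M i j * cnj (Imat n i j)) = M i i * cnj (Imat n i i)" if "i < Suc n" for i
  proof -
    have "(\<Sum>j<Suc n. M i j * cnj (Imat n i j)) = (\<Sum>j<Suc n. if j = i then M i i * cnj (Imat n i i) else 0)"
      by (rule sum.cong) (auto simp: Imat_eq)
    then show ?thesis
      using that by simp
  qed
  have "hs (Suc n) M (Imat n) = (\<Sum>i<Suc n. M i i * cnj (Imat n i i))"
    unfolding hs_def by (intro sum.cong refl row) simp
  also have "\<dots> = (\<Sum>i<n. M i i * Imat_coeff n) + M n n * (- of_nat n * Imat_coeff n)"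
    by (simp add: Imat_eq)
  finally show ?thesis
    by (simp add: sum_distrib_left algebra_simps)
qed

lemma hs_Imat_sl:
  assumes "M \<in> sl (Suc n)"
  shows "hs (Suc n) M (Imat n) = - (of_nat n + 1) * Imat_coeff n * M n n"
proof -
  have "(\<Sum>i<n. M i i) = - M n n"
    using assms by (simp add: sl_iff mtrace_def add_eq_0_iff)
  then show ?thesis
    by (simp add: hs_Imat algebra_simps)
qed

lemma hs_Imat_Imat: "0 < n \<Longrightarrow> hs (Suc n) (Imat n) (Imat n) = 1"
  using Imat_coeff_sq[of n]
  by (simp add: hs_Imat_sl Imat_in_sl) (simp add: Imat_eq power2_eq_square algebra_simps)

lemma hs_add: "hs N (X + Y) B = hs N X B + hs N Y B"
  by (simp add: hs_def sum.distrib algebra_simps)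

lemma hs_msc: "hs N (msc c X) B = c * hs N X B"
  by (simp add: hs_def sum_distrib_left algebra_simps)

lemma PrCI_eq: "0 < n \<Longrightarrow> PrCI n M = msc (hs (Suc n) M (Imat n)) (Imat n)"
  by (simp add: PrCI_def hs_Imat_Imat)

lemma PrCI_add: "PrCI n (X + Y) = PrCI n X + PrCI n Y"
  by (simp add: PrCI_def hs_add fun_eq_iff add_divide_distrib algebra_simps)

lemma PrCI_msc: "PrCI n (msc c X) = msc c (PrCI n X)"
  by (simp add: PrCI_def hs_msc fun_eq_iff)

lemma PrCI_zero [simp]: "PrCI n 0 = 0"
  by (simp add: PrCI_def hs_def fun_eq_iff)

lemma PrCI_Imat: "0 < n \<Longrightarrow> PrCI n (msc c (Imat n)) = msc c (Imat n)"
  by (simp add: PrCI_msc PrCI_eq hs_Imat_Imat fun_eq_iff)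

lemma PrCI_in_sl: "PrCI n M \<in> sl (Suc n)"
  unfolding PrCI_def by (rule sl_msc[OF Imat_in_sl])

lemma PrCI_eq_0: "M \<in> sl (Suc n) \<Longrightarrow> M n n = 0 \<Longrightarrow> PrCI n M = 0"
  by (simp add: PrCI_def hs_Imat_sl fun_eq_iff)

lemma PrCI_comm_sl: "A \<in> sl n \<Longrightarrow> PrCI n (comm (Suc n) A M) = 0"
  by (rule PrCI_eq_0[OF comm_in_sl]) (simp add: comm_def mmul_def sl_iff_sl_Suc[of A n])

lemma s_spaceI: "(\<And>i j. \<not> ((i < n \<and> j = n) \<or> (i = n \<and> j < n)) \<Longrightarrow> S i j = 0) \<Longrightarrow> S \<in> s_space n"
  unfolding s_space_def by blast

lemma s_spaceD: "S \<in> s_space n \<Longrightarrow> \<not> ((i < n \<and> j = n) \<or> (i = n \<and> j < n)) \<Longrightarrow> S i j = 0"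
  unfolding s_space_def by blast

lemma s_space_add: "S \<in> s_space n \<Longrightarrow> S' \<in> s_space n \<Longrightarrow> S + S' \<in> s_space n"
  by (rule s_spaceI) (simp add: s_spaceD)

lemma s_space_msc: "S \<in> s_space n \<Longrightarrow> msc c S \<in> s_space n"
  by (rule s_spaceI) (simp add: s_spaceD)

lemma s_space_uminus: "S \<in> s_space n \<Longrightarrow> - S \<in> s_space n"
  by (rule s_spaceI) (simp add: s_spaceD)

lemma zero_in_s_space: "0 \<in> s_space n"
  by (rule s_spaceI) simp

lemma s_space_in_sl:
  assumes "S \<in> s_space n"
  shows "S \<in> sl (Suc n)"
proof -
  have "S i j = 0" if "Suc n \<le> i \<or> Suc n \<le> j" for i j
    using that by (intro s_spaceD[OF assms]) auto
  moreover have "mtrace (Suc n) S = 0"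
    unfolding mtrace_def by (rule sum.neutral) (auto intro: s_spaceD[OF assms])
  ultimately show ?thesis
    by (simp add: sl_iff)
qed

lemma PrCI_s_space: "S \<in> s_space n \<Longrightarrow> PrCI n S = 0"
  by (simp add: PrCI_eq_0 s_space_in_sl s_spaceD)

lemma comm_sl_s_space:
  assumes A: "A \<in> sl n" and S: "S \<in> s_space n"
  shows "comm (Suc n) A S \<in> s_space n"
proof (rule s_spaceI)
  fix i j
  assume off: "\<not> ((i < n \<and> j = n) \<or> (i = n \<and> j < n))"
  have AS: "A i k * S k j = 0" for k
  proof (cases "(k < n \<and> j = n) \<or> (k = n \<and> j < n)")
    case True
    with off have "n \<le> i \<or> n \<le> k"
      by auto
    then show ?thesis
      using slD[OF A] by simp
  qed (simp add: s_spaceD[OF S])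
  have SA: "S i k * A k j = 0" for k
  proof (cases "(i < n \<and> k = n) \<or> (i = n \<and> k < n)")
    case True
    with off have "n \<le> k \<or> n \<le> j"
      by auto
    then show ?thesis
      using slD[OF A] by simp
  qed (simp add: s_spaceD[OF S])
  show "comm (Suc n) A S i j = 0"
    unfolding comm_def mmul_def AS SA by simp
qed

lemma comm_s_space_sl: "A \<in> sl n \<Longrightarrow> S \<in> s_space n \<Longrightarrow> comm (Suc n) S A \<in> s_space n"
  by (metis comm_swap comm_sl_s_space s_space_uminus)

lemma compS_in_s_space: "compS n X \<in> s_space n"
  unfolding s_space_def compS_def by auto

lemma compS_add: "compS n (X + Y) = compS n X + compS n Y"
  by (simp add: compS_def fun_eq_iff)

lemma compS_msc: "compS n (msc c X) = msc c (compS n X)"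
  by (simp add: compS_def fun_eq_iff)

lemma compSl_add: "compSl n (X + Y) = compSl n X + compSl n Y"
  by (simp add: compSl_def PrCI_add compS_add fun_eq_iff)

lemma compSl_msc: "compSl n (msc c X) = msc c (compSl n X)"
  by (simp add: compSl_def PrCI_msc compS_msc fun_eq_iff algebra_simps)

lemma compS_sl: "A \<in> sl n \<Longrightarrow> compS n A = 0"
  by (simp add: compS_def fun_eq_iff slD)

lemma compSl_sl: "A \<in> sl n \<Longrightarrow> compSl n A = A"
  using sl_iff_sl_Suc[of A n] by (simp add: compSl_def compS_sl PrCI_eq_0 fun_eq_iff)

lemma compS_s_space: "S \<in> s_space n \<Longrightarrow> compS n S = S"
  by (auto simp: compS_def fun_eq_iff s_spaceD)

lemma compSl_s_space: "S \<in> s_space n \<Longrightarrow> compSl n S = 0"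
  by (simp add: compSl_def PrCI_s_space compS_s_space fun_eq_iff)

lemma compS_Imat: "compS n (msc c (Imat n)) = 0"
  by (simp add: compS_def fun_eq_iff Imat_eq)

lemma compSl_Imat: "0 < n \<Longrightarrow> compSl n (msc c (Imat n)) = 0"
  by (simp add: compSl_def PrCI_Imat compS_Imat fun_eq_iff)

lemma compS_PrCI: "compS n (PrCI n M) = 0"
  unfolding PrCI_def by (rule compS_Imat)

lemma compSl_PrCI: "0 < n \<Longrightarrow> compSl n (PrCI n M) = 0"
  unfolding PrCI_def by (rule compSl_Imat)

lemma compSl_in_sl:
  assumes n: "0 < n" and X: "X \<in> sl (Suc n)"
  shows "compSl n X \<in> sl n"
proof -
  have entry: "compSl n X i j
      = X i j + (of_nat n + 1) * Imat_coeff n * X n n * Imat n i j - compS n X i j" for i j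
    using X by (simp add: compSl_def PrCI_eq[OF n] hs_Imat_sl algebra_simps)
  have "compSl n X = X - PrCI n X - compS n X"
    by (simp add: compSl_def fun_eq_iff)
  then have "compSl n X \<in> sl (Suc n)"
    by (simp add: sl_diff X PrCI_in_sl s_space_in_sl compS_in_s_space)
  moreover have nn: "compSl n X n n = 0"
  proof -
    have "compSl n X n n = X n n * (1 - Imat_coeff n ^ 2 * (of_nat n * (of_nat n + 1)))"
      by (simp add: entry compS_def Imat_eq algebra_simps power2_eq_square)
    then show ?thesis
      using Imat_coeff_sq[OF n] by simp
  qed
  have "compSl n X i n = 0 \<and> compSl n X n i = 0" for i
    using nn slD[OF X] by (cases "i = n") (auto simp: entry compS_def Imat_eq)
  ultimately show ?thesis
    unfolding sl_iff_sl_Suc[of _ n] by blast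
qed

section \<open>The bracket mu_inf\<close>

definition mu_coeff :: "nat \<Rightarrow> complex" where
  "mu_coeff n = complex_of_real (sqrt ((real n ^ 2 - 2) / (real n * (real n + 1))))"

lemma mu_inf_eq: "mu_inf n X Y = comm (Suc n) (compSl n X) (compSl n Y)
    + comm (Suc n) (compSl n X) (compS n Y) + comm (Suc n) (compS n X) (compSl n Y)
    + msc (mu_coeff n) (PrCI n (comm (Suc n) (compS n X) (compS n Y)))"
  by (simp add: mu_inf_def mu_coeff_def)

lemma mu_inf_in_sl: "mu_inf n X Y \<in> sl (Suc n)"
  unfolding mu_inf_eq by (intro sl_add sl_msc comm_in_sl PrCI_in_sl)

lemma mu_inf_add_msc_left: "mu_inf n (X + msc c Y) Z = mu_inf n X Z + msc c (mu_inf n Y Z)"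
  unfolding mu_inf_eq compSl_add compSl_msc compS_add compS_msc comm_add_left comm_msc_left
    PrCI_add PrCI_msc msc_add msc_msc
  by (simp add: fun_eq_iff algebra_simps)

lemma mu_inf_add_msc_right: "mu_inf n Z (X + msc c Y) = mu_inf n Z X + msc c (mu_inf n Z Y)"
  unfolding mu_inf_eq compSl_add compSl_msc compS_add compS_msc comm_add_right comm_msc_right
    PrCI_add PrCI_msc msc_add msc_msc
  by (simp add: fun_eq_iff algebra_simps)

lemma mu_inf_self: "mu_inf n X X = 0"
  unfolding mu_inf_eq comm_swap[of _ "compS n X" "compSl n X"] by simp

lemma mu_inf_sl_sl: "A \<in> sl n \<Longrightarrow> B \<in> sl n \<Longrightarrow> mu_inf n A B = comm (Suc n) A B"
  by (simp add: mu_inf_eq compSl_sl compS_sl)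

lemma mu_inf_s_space_s_space:
  "S \<in> s_space n \<Longrightarrow> T \<in> s_space n
    \<Longrightarrow> mu_inf n S T = msc (mu_coeff n) (PrCI n (comm (Suc n) S T))"
  by (simp add: mu_inf_eq compSl_s_space compS_s_space)

lemma mu_inf_Imat: "0 < n \<Longrightarrow> mu_inf n X (msc c (Imat n)) = 0"
  by (simp add: mu_inf_eq compSl_Imat compS_Imat)

lemma compSl_mu_inf:
  assumes "0 < n" "X \<in> sl (Suc n)" "Y \<in> sl (Suc n)"
  shows "compSl n (mu_inf n X Y) = comm (Suc n) (compSl n X) (compSl n Y)"
proof -
  have "compSl n X \<in> sl n" "compSl n Y \<in> sl n"
    using assms compSl_in_sl by auto
  then show ?thesis
    unfolding mu_inf_eq compSl_add compSl_msc compSl_PrCI[OF \<open>0 < n\<close>]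
    by (simp add: compSl_sl comm_sl_sl compSl_s_space comm_sl_s_space comm_s_space_sl compS_in_s_space)
qed

lemma compS_mu_inf:
  assumes "0 < n" "X \<in> sl (Suc n)" "Y \<in> sl (Suc n)"
  shows "compS n (mu_inf n X Y)
    = comm (Suc n) (compSl n X) (compS n Y) + comm (Suc n) (compS n X) (compSl n Y)"
proof -
  have "compSl n X \<in> sl n" "compSl n Y \<in> sl n"
    using assms compSl_in_sl by auto
  then show ?thesis
    unfolding mu_inf_eq compS_add compS_msc compS_PrCI
    by (simp add: compS_sl comm_sl_sl compS_s_space comm_sl_s_space comm_s_space_sl compS_in_s_space)
qed

lemma PrCI_jacobi_pair:
  assumes "A \<in> sl n"
  shows "PrCI n (comm (Suc n) S (comm (Suc n) A T)) + PrCI n (comm (Suc n) T (comm (Suc n) S A)) = 0"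
proof -
  have "PrCI n (comm (Suc n) S (comm (Suc n) A T) + comm (Suc n) A (comm (Suc n) T S)
      + comm (Suc n) T (comm (Suc n) S A)) = 0"
    by (simp add: comm_jacobi)
  then show ?thesis
    by (simp add: PrCI_add PrCI_comm_sl[OF assms])
qed

text \<open>The double bracket \<^term>\<open>mu_inf n X (mu_inf n Y Z)\<close> expressed through the
  \<^term>\<open>sl n\<close>-parts A and \<^term>\<open>s_space n\<close>-parts S of X, Y, Z (see \<open>mu_inf_mu_inf\<close>).\<close>

definition nested_bracket ::
    "nat \<Rightarrow> complex \<Rightarrow> cmat \<Rightarrow> cmat \<Rightarrow> cmat \<Rightarrow> cmat \<Rightarrow> cmat \<Rightarrow> cmat \<Rightarrow> cmat" where
  "nested_bracket n k A1 S1 A2 S2 A3 S3 =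
     comm (Suc n) A1 (comm (Suc n) A2 A3)
     + comm (Suc n) A1 (comm (Suc n) A2 S3 + comm (Suc n) S2 A3)
     + comm (Suc n) S1 (comm (Suc n) A2 A3)
     + msc k (PrCI n (comm (Suc n) S1 (comm (Suc n) A2 S3 + comm (Suc n) S2 A3)))"

lemma nested_bracket_jacobi:
  assumes A1: "A1 \<in> sl n" and A2: "A2 \<in> sl n" and A3: "A3 \<in> sl n"
  shows "nested_bracket n k A1 S1 A2 S2 A3 S3 + nested_bracket n k A2 S2 A3 S3 A1 S1
    + nested_bracket n k A3 S3 A1 S1 A2 S2 = 0"
proof -
  let ?c = "comm (Suc n)"
  have "nested_bracket n k A1 S1 A2 S2 A3 S3 + nested_bracket n k A2 S2 A3 S3 A1 S1
      + nested_bracket n k A3 S3 A1 S1 A2 S2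
    = (?c A1 (?c A2 A3) + ?c A2 (?c A3 A1) + ?c A3 (?c A1 A2))
    + (?c A1 (?c A2 S3) + ?c A2 (?c S3 A1) + ?c S3 (?c A1 A2))
    + (?c A2 (?c A3 S1) + ?c A3 (?c S1 A2) + ?c S1 (?c A2 A3))
    + (?c A3 (?c A1 S2) + ?c A1 (?c S2 A3) + ?c S2 (?c A3 A1))
    + msc k ((PrCI n (?c S1 (?c A2 S3)) + PrCI n (?c S3 (?c S1 A2)))
           + (PrCI n (?c S2 (?c A3 S1)) + PrCI n (?c S1 (?c S2 A3)))
           + (PrCI n (?c S3 (?c A1 S2)) + PrCI n (?c S2 (?c S3 A1))))"
    unfolding nested_bracket_def comm_add_right PrCI_add msc_add
    by (simp add: fun_eq_iff algebra_simps)
  also have "\<dots> = 0"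
    unfolding comm_jacobi PrCI_jacobi_pair[OF A1] PrCI_jacobi_pair[OF A2] PrCI_jacobi_pair[OF A3]
    by simp
  finally show ?thesis .
qed

lemma mu_inf_mu_inf:
  assumes "0 < n" "Y \<in> sl (Suc n)" "Z \<in> sl (Suc n)"
  shows "mu_inf n X (mu_inf n Y Z) = nested_bracket n (mu_coeff n)
    (compSl n X) (compS n X) (compSl n Y) (compS n Y) (compSl n Z) (compS n Z)"
  unfolding mu_inf_eq[of n X] compSl_mu_inf[OF assms] compS_mu_inf[OF assms] nested_bracket_def
  by simp

lemma mu_inf_jacobi:
  assumes "0 < n" "X \<in> sl (Suc n)" "Y \<in> sl (Suc n)" "Z \<in> sl (Suc n)"
  shows "mu_inf n X (mu_inf n Y Z) + mu_inf n Y (mu_inf n Z X) + mu_inf n Z (mu_inf n X Y) = 0"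
  using assms by (simp add: mu_inf_mu_inf nested_bracket_jacobi compSl_in_sl)

lemma lie_algebra_mu_inf: "0 < n \<Longrightarrow> lie_algebra (sl (Suc n)) (mu_inf n)"
  unfolding lie_algebra_def
  by (simp add: subspace_c_sl mu_inf_in_sl mu_inf_add_msc_left mu_inf_add_msc_right mu_inf_self
      mu_inf_jacobi)

section \<open>The semidirect product and the Heisenberg ideal\<close>

lemma subalgebra_sl: "subalgebra (sl (Suc n)) (mu_inf n) (sl n)"
  unfolding subalgebra_def by (simp add: sl_subset_sl_Suc subspace_c_sl mu_inf_sl_sl comm_sl_sl)

lemma heis_part_subset_sl: "heis_part n \<subseteq> sl (Suc n)"
  unfolding heis_part_def by (auto intro: sl_add sl_msc Imat_in_sl s_space_in_sl)

lemma subspace_c_heis_part: "subspace_c (heis_part n)"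
  unfolding subspace_c_def
proof (intro conjI ballI allI)
  have "0 = msc 0 (Imat n) + 0"
    by simp
  then show "0 \<in> heis_part n"
    unfolding heis_part_def using zero_in_s_space by blast
next
  fix X Y
  assume "X \<in> heis_part n" "Y \<in> heis_part n"
  then obtain c c' S S' where "S \<in> s_space n" "S' \<in> s_space n"
    and "X = msc c (Imat n) + S" "Y = msc c' (Imat n) + S'"
    unfolding heis_part_def by auto
  then have "S + S' \<in> s_space n" "X + Y = msc (c + c') (Imat n) + (S + S')"
    by (simp_all add: s_space_add fun_eq_iff algebra_simps)
  then show "X + Y \<in> heis_part n"
    unfolding heis_part_def by blast
next
  fix d X
  assume "X \<in> heis_part n"
  then obtain c S where "S \<in> s_space n" "X = msc c (Imat n) + S"
    unfolding heis_part_def by auto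
  then have "msc d S \<in> s_space n" "msc d X = msc (d * c) (Imat n) + msc d S"
    by (simp_all add: s_space_msc fun_eq_iff algebra_simps)
  then show "msc d X \<in> heis_part n"
    unfolding heis_part_def by blast
qed

lemma lie_ideal_heis_part:
  assumes n: "0 < n"
  shows "lie_ideal (sl (Suc n)) (mu_inf n) (heis_part n)"
  unfolding lie_ideal_def
proof (intro conjI ballI heis_part_subset_sl subspace_c_heis_part)
  fix X H
  assume X: "X \<in> sl (Suc n)" and "H \<in> heis_part n"
  then obtain c S where S: "S \<in> s_space n" and H: "H = msc c (Imat n) + S"
    unfolding heis_part_def by auto
  have "mu_inf n X H = PrCI n (msc (mu_coeff n) (comm (Suc n) (compS n X) S)) + comm (Suc n) (compSl n X) S"
    by (simp add: H mu_inf_eq compSl_add compS_add compSl_Imat[OF n] compS_Imat compSl_s_space[OF S]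
        compS_s_space[OF S] PrCI_msc add.commute)
  then show "mu_inf n X H \<in> heis_part n"
    unfolding heis_part_def PrCI_def using comm_sl_s_space[OF compSl_in_sl[OF n X] S] by blast
qed

lemma sl_inter_heis_part: "0 < n \<Longrightarrow> sl n \<inter> heis_part n = {0}"
proof (intro equalityI subsetI)
  fix X
  assume n: "0 < n" and "X \<in> sl n \<inter> heis_part n"
  then obtain c S where X: "X \<in> sl n" and S: "S \<in> s_space n" and XcS: "X = msc c (Imat n) + S"
    unfolding heis_part_def by auto
  have "- c * of_nat n * Imat_coeff n = X n n"
    using s_spaceD[OF S, of n n] by (simp add: XcS Imat_eq)
  also have "\<dots> = 0"
    using slD[OF X] by simp
  finally have "c = 0"
    using Imat_coeff_nonzero[OF n] n by simp
  then have "X i j = 0" for i j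
    using slD[OF X] s_spaceD[OF S, of i j]
    by (cases "(i < n \<and> j = n) \<or> (i = n \<and> j < n)") (auto simp: XcS)
  then show "X \<in> {0}"
    by (simp add: fun_eq_iff)
next
  show "X \<in> sl n \<inter> heis_part n" if "X \<in> {0}" for X
    using that sl_zero subspace_c_heis_part by (simp add: subspace_c_def)
qed

lemma sl_Suc_decomp:
  assumes "0 < n" "X \<in> sl (Suc n)"
  shows "\<exists>A\<in>sl n. \<exists>H\<in>heis_part n. X = A + H"
proof -
  have "X = compSl n X + (PrCI n X + compS n X)"
    by (simp add: compSl_def fun_eq_iff)
  moreover have "PrCI n X + compS n X \<in> heis_part n"
    unfolding heis_part_def PrCI_def using compS_in_s_space by blast
  ultimately show ?thesis
    using compSl_in_sl[OF assms] by blast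
qed

lemma semidirect_mu_inf: "0 < n \<Longrightarrow> semidirect (sl (Suc n)) (mu_inf n) (sl n) (heis_part n)"
  unfolding semidirect_def
  using subalgebra_sl lie_ideal_heis_part sl_inter_heis_part sl_Suc_decomp by blast

lemma mu_coeff_nonzero:
  assumes "2 \<le> n"
  shows "mu_coeff n \<noteq> 0"
proof -
  have "real n ^ 2 \<ge> 2 ^ 2"
    using assms by (intro power_mono) auto
  then have "(real n ^ 2 - 2) / (real n * (real n + 1)) > 0"
    using assms by simp
  then show ?thesis
    using assms \<open>real n ^ 2 \<ge> 2 ^ 2\<close> by (simp add: mu_coeff_def)
qed

lemma emat_col_in_s_space: "i < n \<Longrightarrow> emat i n \<in> s_space n"
  by (rule s_spaceI) (auto simp: emat_def)

lemma emat_row_in_s_space: "i < n \<Longrightarrow> emat n i \<in> s_space n"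
  by (rule s_spaceI) (auto simp: emat_def)

lemma comm_emat_col_row:
  "i < n \<Longrightarrow> j < n
    \<Longrightarrow> comm (Suc n) (emat i n) (emat n j) = emat i j - (if i = j then emat n n else 0)"
  by (simp add: comm_eq mmul_emat)

lemma comm_emat_col_col: "i < n \<Longrightarrow> j < n \<Longrightarrow> comm (Suc n) (emat i n) (emat j n) = 0"
  by (simp add: comm_eq mmul_emat)

lemma comm_emat_row_row: "i < n \<Longrightarrow> j < n \<Longrightarrow> comm (Suc n) (emat n i) (emat n j) = 0"
  by (simp add: comm_eq mmul_emat)

definition heis_center :: "nat \<Rightarrow> cmat" where
  "heis_center n = msc (mu_coeff n * (of_nat n + 1) * Imat_coeff n) (Imat n)"

lemma mu_inf_emat_col_row:
  assumes "0 < n" "i < n" "j < n"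
  shows "mu_inf n (emat i n) (emat n j) = (if i = j then heis_center n else 0)"
proof -
  have "comm (Suc n) (emat i n) (emat n j) n n = - (if i = j then 1 else 0)"
    using assms by (simp add: comm_emat_col_row) (simp add: emat_def)
  then have "PrCI n (comm (Suc n) (emat i n) (emat n j))
      = msc (if i = j then (of_nat n + 1) * Imat_coeff n else 0) (Imat n)"
    using assms(1) by (simp add: PrCI_eq hs_Imat_sl comm_in_sl algebra_simps)
  then show ?thesis
    using assms by (simp add: mu_inf_s_space_s_space emat_col_in_s_space emat_row_in_s_space
        heis_center_def msc_msc mult.assoc)
qed

lemma mu_inf_emat_col_col: "i < n \<Longrightarrow> j < n \<Longrightarrow> mu_inf n (emat i n) (emat j n) = 0"
  by (simp add: mu_inf_s_space_s_space emat_col_in_s_space comm_emat_col_col)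

lemma mu_inf_emat_row_row: "i < n \<Longrightarrow> j < n \<Longrightarrow> mu_inf n (emat n i) (emat n j) = 0"
  by (simp add: mu_inf_s_space_s_space emat_row_in_s_space comm_emat_row_row)

lemma heis_center_in_heis_part: "heis_center n \<in> heis_part n"
  unfolding heis_part_def heis_center_def using zero_in_s_space by force

lemma s_space_in_heis_part: "S \<in> s_space n \<Longrightarrow> S \<in> heis_part n"
  unfolding heis_part_def by force

lemma heisenberg_mu_inf:
  assumes n: "2 \<le> n"
  shows "heisenberg n (heis_part n) (mu_inf n)"
proof -
  let ?X = "\<lambda>i. emat i n" and ?Y = "\<lambda>i. emat n i" and ?Z = "heis_center n"
  let ?comb = "\<lambda>a a' c. (\<Sum>i<n. msc (a i) (?X i)) + (\<Sum>i<n. msc (a' i) (?Y i)) + msc c ?Z"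
  define z where "z = mu_coeff n * (of_nat n + 1) * Imat_coeff n"
  have "(of_nat n + 1 :: complex) \<noteq> 0"
    by (metis of_nat_Suc of_nat_neq_0 add.commute)
  then have z: "z \<noteq> 0"
    using n mu_coeff_nonzero Imat_coeff_nonzero by (simp add: z_def)
  have comb_entry: "?comb a a' c p q
      = (if p < n \<and> q = n then a p else 0) + (if p = n \<and> q < n then a' q else 0) + c * z * Imat n p q"
    for a a' c p q
    by (simp add: sum_msc_emat_col sum_msc_emat_row heis_center_def z_def)
  have independent: "(\<forall>i<n. a i = 0 \<and> a' i = 0) \<and> c = 0" if "?comb a a' c = 0" for a a' c
  proof -
    have entry: "(if p < n \<and> q = n then a p else 0) + (if p = n \<and> q < n then a' q else 0)
        + c * z * Imat n p q = 0" for p q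
      using that comb_entry[of a a' c p q] by simp
    have "a i = 0 \<and> a' i = 0" if "i < n" for i
      using entry[of i n] entry[of n i] that by (simp add: Imat_eq)
    moreover have "c = 0"
      using entry[of n n] z n Imat_coeff_nonzero[of n] by (simp add: Imat_eq)
    ultimately show ?thesis
      by blast
  qed
  have spanning: "\<exists>a a' c. H = ?comb a a' c" if "H \<in> heis_part n" for H
  proof -
    obtain c S where S: "S \<in> s_space n" and H_eq: "H = msc c (Imat n) + S"
      using \<open>H \<in> heis_part n\<close> unfolding heis_part_def by auto
    have entries: "H p q = ?comb (\<lambda>i. S i n) (\<lambda>i. S n i) (c / z) p q" for p q
      unfolding comb_entry H_eq using z s_spaceD[OF S, of p q] by (auto simp: Imat_eq)
    have "H = ?comb (\<lambda>i. S i n) (\<lambda>i. S n i) (c / z)"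
      by (intro ext) (rule entries)
    then show ?thesis
      by (intro exI[of _ "\<lambda>i. S i n"] exI[of _ "\<lambda>i. S n i"] exI[of _ "c / z"])
  qed
  have central: "mu_inf n M ?Z = 0" for M
    using n by (simp add: heis_center_def mu_inf_Imat)
  show ?thesis
    unfolding heisenberg_def
    by (rule exI[of _ ?X], rule exI[of _ ?Y], rule exI[of _ ?Z])
      (use independent spanning n in \<open>simp add: emat_col_in_s_space emat_row_in_s_space
        s_space_in_heis_part heis_center_in_heis_part central mu_inf_emat_col_row
        mu_inf_emat_col_col mu_inf_emat_row_row\<close>)
qed

theorem lemma3p11:
  fixes n :: nat
  assumes "2 \<le> n"
  shows "lie_algebra (sl (Suc n)) (mu_inf n)
       \<and> semidirect (sl (Suc n)) (mu_inf n) (sl n) (heis_part n)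
       \<and> heisenberg n (heis_part n) (mu_inf n)"
  using assms lie_algebra_mu_inf semidirect_mu_inf heisenberg_mu_inf by simp

end
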